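(* Let $\mathfrak{g}$ be a finite-dimensional Lie algebra over a field $K$ of characteristic zero admitting a nondegenerate inner CPA-structure. Then $\mathfrak{g}$ is metabelian, i.e. $[[\mathfrak{g},\mathfrak{g}],[\mathfrak{g},\mathfrak{g}]]=0$.
   Context: A CPA-structure on $\mathfrak{g}$ is a bilinear product $x\cdot y$ satisfying, for all $x,y,z$: $x\cdot y=y\cdot x$; $[x,y]\cdot z=x\cdot(y\cdot z)-y\cdot(x\cdot z)$; $x\cdot[y,z]=[x\cdot y,z]+[y,x\cdot z]$. It is inner if $x\cdot y=[\phi(x),y]$ for some Lie algebra homomorphism $\phi:\mathfrak{g}\to\mathfrak{g}$, and nondegenerate if $\{x\mid x\cdot y=0\ \forall y\}=0$. *)

theory Defs
  imports Main "HOL.Vector_Spaces"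
begin

definition lie_algebra :: "('k::field \<Rightarrow> 'v::ab_group_add \<Rightarrow> 'v) \<Rightarrow> ('v \<Rightarrow> 'v \<Rightarrow> 'v) \<Rightarrow> bool" where
  "lie_algebra scale br \<longleftrightarrow>
     vector_space scale \<and>
     (\<forall>y. Vector_Spaces.linear scale scale (\<lambda>x. br x y)) \<and>
     (\<forall>x. Vector_Spaces.linear scale scale (\<lambda>y. br x y)) \<and>
     (\<forall>x. br x x = 0) \<and>
     (\<forall>x y z. br x (br y z) + br y (br z x) + br z (br x y) = 0)"

definition fin_dim_space :: "('k::field \<Rightarrow> 'v::ab_group_add \<Rightarrow> 'v) \<Rightarrow> bool" where
  "fin_dim_space scale \<longleftrightarrow> (\<exists>B. finite B \<and> module.span scale B = UNIV)"

definition lie_hom :: "('k::field \<Rightarrow> 'v::ab_group_add \<Rightarrow> 'v) \<Rightarrow> ('v \<Rightarrow> 'v \<Rightarrow> 'v) \<Rightarrow> ('v \<Rightarrow> 'v) \<Rightarrow> bool" where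
  "lie_hom scale br \<phi> \<longleftrightarrow> Vector_Spaces.linear scale scale \<phi> \<and> (\<forall>x y. \<phi> (br x y) = br (\<phi> x) (\<phi> y))"

definition cpa_structure :: "('k::field \<Rightarrow> 'v::ab_group_add \<Rightarrow> 'v) \<Rightarrow> ('v \<Rightarrow> 'v \<Rightarrow> 'v) \<Rightarrow> ('v \<Rightarrow> 'v \<Rightarrow> 'v) \<Rightarrow> bool" where
  "cpa_structure scale br pr \<longleftrightarrow>
     (\<forall>y. Vector_Spaces.linear scale scale (\<lambda>x. pr x y)) \<and>
     (\<forall>x. Vector_Spaces.linear scale scale (\<lambda>y. pr x y)) \<and>
     (\<forall>x y. pr x y = pr y x) \<and>
     (\<forall>x y z. pr (br x y) z = pr x (pr y z) - pr y (pr x z)) \<and>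
     (\<forall>x y z. pr x (br y z) = br (pr x y) z + br y (pr x z))"

definition inner_cpa :: "('k::field \<Rightarrow> 'v::ab_group_add \<Rightarrow> 'v) \<Rightarrow> ('v \<Rightarrow> 'v \<Rightarrow> 'v) \<Rightarrow> ('v \<Rightarrow> 'v \<Rightarrow> 'v) \<Rightarrow> bool" where
  "inner_cpa scale br pr \<longleftrightarrow> (\<exists>\<phi>. lie_hom scale br \<phi> \<and> (\<forall>x y. pr x y = br (\<phi> x) y))"

definition nondegenerate_cpa :: "('v::ab_group_add \<Rightarrow> 'v \<Rightarrow> 'v) \<Rightarrow> bool" where
  "nondegenerate_cpa pr \<longleftrightarrow> {x. \<forall>y. pr x y = 0} = {0}"

definition derived :: "('k::field \<Rightarrow> 'v::ab_group_add \<Rightarrow> 'v) \<Rightarrow> ('v \<Rightarrow> 'v \<Rightarrow> 'v) \<Rightarrow> 'v set" where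
  "derived scale br = module.span scale {br x y | x y. True}"

definition metabelian :: "('k::field \<Rightarrow> 'v::ab_group_add \<Rightarrow> 'v) \<Rightarrow> ('v \<Rightarrow> 'v \<Rightarrow> 'v) \<Rightarrow> bool" where
  "metabelian scale br \<longleftrightarrow> (\<forall>x\<in>derived scale br. \<forall>y\<in>derived scale br. br x y = 0)"

end

theory Submission
  imports Defs
begin

text \<open>Write \<open>D\<close> for the homomorphism \<open>\<phi>\<close> of the inner CPA-structure. Commutativity of
  \<open>x \<cdot> y = [D x, y]\<close> makes \<open>D\<close> skew for the bracket, \<open>[D x, y] = - [x, D y]\<close>, and together with
  \<open>D [x, y] = [D x, D y]\<close> this lets \<open>D\<^sup>2\<close> be moved freely between the arguments of a bracket
  of brackets. Expanding \<open>[[D a, b] + [a, D b], [c, d]] = 0\<close> with the Jacobi identity and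
  comparing with the antisymmetry \<open>[[a, b], [c, d]] = - [[c, d], [a, b]]\<close> gives
  \<open>2 [[D\<^sup>2 a, b], [c, d]] = 0\<close>. Hence \<open>D\<^sup>2\<close> kills every \<open>[[a, b], [c, d]]\<close>, and \<open>D\<close> is injective
  by nondegeneracy.\<close>

locale lie_ring =
  fixes br :: "'v::ab_group_add \<Rightarrow> 'v \<Rightarrow> 'v"
  assumes add_left: "br (x + y) z = br x z + br y z"
    and add_right: "br x (y + z) = br x y + br x z"
    and alternating: "br x x = 0"
    and jacobi: "br x (br y z) + br y (br z x) + br z (br x y) = 0"
begin

lemma zero_left [simp]: "br 0 y = 0"
  using add_left [of 0 0 y] by simp

lemma zero_right [simp]: "br x 0 = 0"
  using add_right [of x 0 0] by simp

lemma minus_left [simp]: "br (- x) y = - br x y"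
  using add_left [of "- x" x y] by (simp add: eq_neg_iff_add_eq_0)

lemma minus_right [simp]: "br x (- y) = - br x y"
  using add_right [of x "- y" y] by (simp add: eq_neg_iff_add_eq_0)

lemma anticommute: "br y x = - br x y"
proof -
  have "br x y + br y x = br (x + y) (x + y)"
    by (simp add: add_left add_right alternating [of x] alternating [of y])
  also have "\<dots> = 0" by (rule alternating)
  finally show ?thesis by (simp add: eq_neg_iff_add_eq_0 add.commute)
qed

lemma jacobi_left: "br (br x y) z = br x (br y z) - br y (br x z)"
  using jacobi [of x y z] anticommute [of z "br x y"] anticommute [of z x]
  by (simp add: algebra_simps eq_neg_iff_add_eq_0)

end

lemma lie_algebra_imp_lie_ring:
  assumes "lie_algebra scale br"
  shows "lie_ring br"
proof -
  have "Vector_Spaces.linear scale scale (\<lambda>x. br x y)"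
    and "Vector_Spaces.linear scale scale (\<lambda>y. br x y)" for x y
    using assms by (auto simp: lie_algebra_def)
  then show ?thesis
    using assms by unfold_locales (auto simp: lie_algebra_def linear_iff)
qed

locale symmetric_inner_product = lie_ring +
  fixes D :: "'v::ab_group_add \<Rightarrow> 'v"
  assumes hom: "D (br x y) = br (D x) (D y)"
    and product_commute: "br (D x) y = br (D y) x"
begin

lemma skew: "br (D x) y = - br x (D y)"
  by (simp add: product_commute anticommute [of x])

lemma skew': "br x (D y) = - br (D x) y"
  by (simp add: skew)

lemma hom_bracket: "D (br x y) = - br (D (D x)) y"
  by (simp add: hom skew')

lemma hom_bracket': "D (br x y) = - br x (D (D y))"
  by (simp add: hom skew)

lemma hom_hom_bracket: "D (D (br x y)) = br (D (D (D (D x)))) y"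
proof -
  have "D (D (br x y)) = br (D (D x)) (D (D y))" by (simp only: hom)
  also have "\<dots> = br (D (D (D (D x)))) y" by (simp add: skew')
  finally show ?thesis .
qed

lemma skew_bracket: "br (D x) (br y z) = br x (br (D (D y)) z)"
  by (simp add: skew hom_bracket)

lemma skew_bracket': "br (D x) (br y z) = br x (br y (D (D z)))"
  by (simp add: skew hom_bracket')

lemma bracket_hom_hom_left: "br (br (D (D a)) b) w = br (br a b) (D w)"
proof -
  have left: "br (D (D a)) b = - D (br a b)" by (simp add: hom_bracket)
  show ?thesis unfolding left by (simp add: skew)
qed

text \<open>Jacobi expansion of \<open>[[D a, b] + [a, D b], [c, d]]\<close>, whose left entry vanishes by skewness.\<close>
lemma derived_hom_hom_sum:
  "br (br a b) (br (D (D c)) d) + br (br a b) (br (D (D (D (D c)))) d) = 0"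
proof -
  let ?w = "br c d" and ?w2 = "br (D (D c)) d" and ?w4 = "br (D (D (D (D c)))) d"
  have "0 = br (br (D a) b + br a (D b)) ?w"
    by (simp add: skew)
  also have "\<dots> = (br (D a) (br b ?w) - br b (br (D a) ?w))
      + (br a (br (D b) ?w) - br (D b) (br a ?w))"
    by (simp add: add_left jacobi_left)
  also have "\<dots> = (br a (br b ?w4) - br b (br a ?w2)) + (br a (br b ?w2) - br b (br a ?w4))"
    by (simp add: skew_bracket' [of a b] skew_bracket' [of b a] skew_bracket
        hom_hom_bracket)
  also have "\<dots> = br (br a b) ?w2 + br (br a b) ?w4"
    by (simp add: jacobi_left)
  finally show ?thesis by simp
qed

lemma derived_hom_hom_left_eq_0:
  assumes two_torsion_free: "\<And>x :: 'v. x + x = 0 \<Longrightarrow> x = 0"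
  shows "br (br (D (D a)) b) (br c d) = 0"
proof -
  let ?p = "br (br (D (D a)) b) (br c d)" and ?q = "br (br (D (D (D (D a)))) b) (br c d)"
  have move2: "br (br x y) (br (D (D u)) v) = - br (br (D (D x)) y) (br u v)" for x y u v
    using bracket_hom_hom_left [of x y "br u v"] by (simp add: hom_bracket)
  have move4: "br (br a b) (br (D (D (D (D c)))) d) = ?q"
    by (simp only: move2 minus_minus)
  have sum: "- ?p + ?q = 0"
    using derived_hom_hom_sum [of a b c d] by (simp only: move2 [of a b c d] move4)
  have diff: "- ?p - ?q = 0"
    using derived_hom_hom_sum [of c d a b] by (simp add: anticommute [of "br c d"])
  have "?p + ?p = - ((- ?p + ?q) + (- ?p - ?q))" by (simp add: algebra_simps)
  also have "\<dots> = 0" by (simp only: sum diff add_0 minus_zero)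
  finally show ?thesis by (rule two_torsion_free)
qed

theorem derived_brackets_commute:
  assumes inj: "\<And>x. D x = 0 \<Longrightarrow> x = 0"
    and two_torsion_free: "\<And>x :: 'v. x + x = 0 \<Longrightarrow> x = 0"
  shows "br (br a b) (br c d) = 0"
proof -
  have "D (D (br (br a b) (br c d)))
      = br (br (D (D a)) (D (D b))) (br (D (D c)) (D (D d)))"
    by (simp add: hom)
  also have "\<dots> = 0"
    by (rule derived_hom_hom_left_eq_0 [OF two_torsion_free])
  finally have "D (br (br a b) (br c d)) = 0" by (rule inj)
  then show ?thesis by (rule inj)
qed

end

lemma vector_space_char_0_double_eq_zero:
  fixes scale :: "'k::field_char_0 \<Rightarrow> 'v::ab_group_add \<Rightarrow> 'v" and x :: 'v
  assumes "vector_space scale" and "x + x = 0"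
  shows "x = 0"
proof -
  interpret vector_space scale by fact
  have "x = scale (1/2 + 1/2) x" by simp
  also have "\<dots> = scale (1/2) (x + x)" by (simp only: scale_left_distrib scale_right_distrib)
  finally show ?thesis using assms(2) by simp
qed

lemma metabelianI:
  assumes "lie_algebra scale br"
    and "\<And>a b c d. br (br a b) (br c d) = 0"
  shows "metabelian scale br"
proof -
  interpret vector_space scale using assms(1) by (simp add: lie_algebra_def)
  interpret lie_ring br using assms(1) by (rule lie_algebra_imp_lie_ring)
  have linear: "Vector_Spaces.linear scale scale (\<lambda>x. br x y)"
    "Vector_Spaces.linear scale scale (\<lambda>y. br x y)" for x y
    using assms(1) by (auto simp: lie_algebra_def)
  have right: "br (br a b) y = 0" if "y \<in> derived scale br" for a b y
    using that unfolding derived_def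
  proof (induction rule: span_induct)
    case base
    show ?case by (rule subspaceI) (auto simp: add_right linear [unfolded linear_iff])
  qed (use assms(2) in auto)
  show ?thesis unfolding metabelian_def
  proof (intro ballI)
    fix x y assume "x \<in> derived scale br" and y: "y \<in> derived scale br"
    then show "br x y = 0" unfolding derived_def
    proof (induction rule: span_induct)
      case base
      show ?case by (rule subspaceI) (auto simp: add_left linear [unfolded linear_iff])
    qed (use right y in auto)
  qed
qed

theorem corollary2p15:
  fixes scale :: "'k::field_char_0 \<Rightarrow> 'v::ab_group_add \<Rightarrow> 'v"
    and br pr :: "'v \<Rightarrow> 'v \<Rightarrow> 'v"
  assumes "lie_algebra scale br"
    and "fin_dim_space scale"
    and "cpa_structure scale br pr"
    and "inner_cpa scale br pr"
    and "nondegenerate_cpa pr"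
  shows "metabelian scale br"
proof -
  interpret lie_ring br using assms(1) by (rule lie_algebra_imp_lie_ring)
  obtain \<phi> where hom: "lie_hom scale br \<phi>" and pr: "\<And>x y. pr x y = br (\<phi> x) y"
    using assms(4) unfolding inner_cpa_def by blast
  interpret symmetric_inner_product br \<phi>
  proof
    show "\<phi> (br x y) = br (\<phi> x) (\<phi> y)" for x y
      using hom by (simp add: lie_hom_def)
    show "br (\<phi> x) y = br (\<phi> y) x" for x y
      using assms(3) by (simp add: cpa_structure_def flip: pr)
  qed
  have inj: "x = 0" if "\<phi> x = 0" for x
    using that assms(5) by (auto simp: nondegenerate_cpa_def pr)
  have "vector_space scale" using assms(1) by (simp add: lie_algebra_def)
  then have two_torsion_free: "x = 0" if "x + x = 0" for x :: 'v
    using that by (rule vector_space_char_0_double_eq_zero)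
  show ?thesis
    using assms(1) derived_brackets_commute [OF inj two_torsion_free] by (rule metabelianI)
qed

end
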